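(* Let $y$ be the solution of the problem $\varepsilon^2 y''(x)=f(x,y)$ on $(0,1)$, $y(0)=y(1)=0$, with $f$ and the Shishkin mesh $\{x_i\}_{i=0}^N$ as described in the context, and let $F$ be the discrete operator defined in the context. Assume that $\varepsilon\leqslant C_0/N$ for some constant $C_0>0$. Then there is a constant $C>0$ independent of $N$ and $\varepsilon$ such that, for the indices $i\in\{N/4,\ldots,N/2-1\}$ with $x_{i-1},x_i,x_{i+1}\in[x_{N/4},1/2]$, $$|(Fy)_i|\leqslant \frac{C}{N^2},$$ where $(Fy)_i$ denotes the $i$-th component of $F$ applied to the vector $(y(x_0),\ldots,y(x_N))^T$.
   Context: Problem: $\varepsilon^2y''(x)=f(x,y)$ on $(0,1)$, $y(0)=y(1)=0$, where $\varepsilon>0$ is a small parameter, $f\in C^k([0,1]\times\mathbb{R})$ for some $k\geq 2$, and $f_y=\partial f/\partial y\geq m>0$ on $[0,1]\times\mathbb{R}$ for a constant $m$; this problem has a unique solution $y$. Shishkin mesh: $N$ is a positive integer divisible by 4, $\lambda=\min\{1/4,\,2\varepsilon\ln N/\sqrt{m}\}$, and it is assumed that $\lambda=2\varepsilon\ln N/\sqrt{m}$. The mesh $0=x_0<x_1<\cdots<x_N=1$ is equidistant on each of $[0,\lambda]$ (with $N/4$ subintervals), $[\lambda,1-\lambda]$ (with $N/2$ subintervals) and $[1-\lambda,1]$ (with $N/4$ subintervals); thus $x_{N/4}=\lambda$, $x_{3N/4}=1-\lambda$, $x_{N/2}=1/2$, subintervals in $[0,\lambda]\cup[1-\lambda,1]$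 have length $4\lambda/N$ and those in $[\lambda,1-\lambda]$ have length $2(1-2\lambda)/N$. Scheme: $\gamma$ is a constant with $\gamma\geq f_y$, and $\beta=\sqrt{\gamma}/\varepsilon$. For $i=1,\ldots,N$ let $\ell_i=x_i-x_{i-1}$, $d_i=\beta/\tanh(\beta\ell_i)$, $a_i=\beta/\sinh(\beta\ell_i)$, $\Delta d_i=d_i-a_i$. For $v=(v_0,\ldots,v_N)^T\in\mathbb{R}^{N+1}$ define $Fv\in\mathbb{R}^{N+1}$ by $(Fv)_0=v_0$, $(Fv)_N=v_N$ and, for $i=1,\ldots,N-1$, $$(Fv)_i=\frac{\gamma}{\Delta d_i+\Delta d_{i+1}}\Big[\tfrac{a_i+d_i}{2}v_{i-1}-\big(\tfrac{a_i+d_i}{2}+\tfrac{a_{i+1}+d_{i+1}}{2}\big)v_i+\tfrac{a_{i+1}+d_{i+1}}{2}v_{i+1}-\tfrac{\Delta d_i}{\gamma}f\big(\tfrac{x_{i-1}+x_i}{2},\tfrac{v_{i-1}+v_i}{2}\big)-\tfrac{\Delta d_{i+1}}{\gamma}f\big(\tfrac{x_{i}+x_{i+1}}{2},\tfrac{v_{i}+v_{i+1}}{2}\big)\Big].$$ *)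

theory Defs
  imports "HOL-Analysis.Analysis"
begin

definition C2_on :: "(real \<times> real) set \<Rightarrow> (real \<times> real \<Rightarrow> real) \<Rightarrow> bool" where
  "C2_on S g \<longleftrightarrow>
     (\<exists>D :: real \<times> real \<Rightarrow> ((real \<times> real) \<Rightarrow>\<^sub>L real).
      \<exists>D2 :: real \<times> real \<Rightarrow> ((real \<times> real) \<Rightarrow>\<^sub>L ((real \<times> real) \<Rightarrow>\<^sub>L real)).
        (\<forall>p\<in>S. (g has_derivative blinfun_apply (D p)) (at p within S)) \<and>
        (\<forall>p\<in>S. (D has_derivative blinfun_apply (D2 p)) (at p within S)) \<and>
        continuous_on S D2)"

definition bvp_solution :: "real \<Rightarrow> (real \<Rightarrow> real \<Rightarrow> real) \<Rightarrow> (real \<Rightarrow> real) \<Rightarrow> bool" where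
  "bvp_solution eps f y \<longleftrightarrow>
     continuous_on {0..1} y \<and> y 0 = 0 \<and> y 1 = 0 \<and>
     (\<exists>y' y''. \<forall>x\<in>{0<..<1}.
        (y has_real_derivative y' x) (at x) \<and>
        (y' has_real_derivative y'' x) (at x) \<and>
        eps^2 * y'' x = f x (y x))"

definition shishkin_lambda :: "real \<Rightarrow> real \<Rightarrow> nat \<Rightarrow> real" where
  "shishkin_lambda eps m N = min (1/4) (2 * eps * ln (real N) / sqrt m)"

definition shishkin_mesh :: "real \<Rightarrow> real \<Rightarrow> nat \<Rightarrow> nat \<Rightarrow> real" where
  "shishkin_mesh eps m N i =
     (let lam = shishkin_lambda eps m N in
      if i \<le> N div 4 then real i * (4 * lam / real N)
      else if i \<le> 3 * N div 4 then lam + real (i - N div 4) * (2 * (1 - 2 * lam) / real N)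
      else (1 - lam) + real (i - 3 * N div 4) * (4 * lam / real N))"

definition sch_beta :: "real \<Rightarrow> real \<Rightarrow> real" where
  "sch_beta gam eps = sqrt gam / eps"

definition sch_d :: "real \<Rightarrow> real \<Rightarrow> (nat \<Rightarrow> real) \<Rightarrow> nat \<Rightarrow> real" where
  "sch_d gam eps x i = sch_beta gam eps / tanh (sch_beta gam eps * (x i - x (i - 1)))"

definition sch_a :: "real \<Rightarrow> real \<Rightarrow> (nat \<Rightarrow> real) \<Rightarrow> nat \<Rightarrow> real" where
  "sch_a gam eps x i = sch_beta gam eps / sinh (sch_beta gam eps * (x i - x (i - 1)))"

definition sch_Dd :: "real \<Rightarrow> real \<Rightarrow> (nat \<Rightarrow> real) \<Rightarrow> nat \<Rightarrow> real" where
  "sch_Dd gam eps x i = sch_d gam eps x i - sch_a gam eps x i"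

text \<open>The discrete operator F on vectors v = (v_0,...,v_N); components outside 0..N are set to 0.\<close>
definition disc_F :: "(real \<Rightarrow> real \<Rightarrow> real) \<Rightarrow> real \<Rightarrow> real \<Rightarrow> (nat \<Rightarrow> real) \<Rightarrow> nat
                      \<Rightarrow> (nat \<Rightarrow> real) \<Rightarrow> nat \<Rightarrow> real" where
  "disc_F f gam eps x N v i =
    (if i = 0 then v 0
     else if i = N then v N
     else if i < N then
       (let ai = sch_a gam eps x i; di = sch_d gam eps x i;
            ai1 = sch_a gam eps x (i + 1); di1 = sch_d gam eps x (i + 1);
            Ddi = sch_Dd gam eps x i; Ddi1 = sch_Dd gam eps x (i + 1)
        in gam / (Ddi + Ddi1) *
           ((ai + di) / 2 * v (i - 1)
            - ((ai + di) / 2 + (ai1 + di1) / 2) * v i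
            + (ai1 + di1) / 2 * v (i + 1)
            - Ddi / gam * f ((x (i - 1) + x i) / 2) ((v (i - 1) + v i) / 2)
            - Ddi1 / gam * f ((x i + x (i + 1)) / 2) ((v i + v (i + 1)) / 2)))
     else 0)"

end

theory Submission
  imports Defs
begin

text \<open>Strong monotonicity of \<open>f\<close> in its second argument gives a unique reduced solution
  \<open>y\<^sub>0\<close> with \<open>f(x, y\<^sub>0(x)) = 0\<close>, and the implicit function argument makes it \<open>C\<^sup>2\<close> on
  \<open>(0,1)\<close> with bounded second derivative. The barrier
  \<open>M (exp(-kx) + exp(-k(1-x))) + K \<epsilon>\<^sup>2/m\<close> with \<open>k = \<surd>m/\<epsilon>\<close> and the maximum principle
  bound \<open>|y - y\<^sub>0|\<close>; since \<open>exp(-k\<lambda>) = 1/N\<^sup>2\<close> and \<open>\<epsilon> \<le> C\<^sub>0/N\<close>, this is \<open>O(1/N\<^sup>2)\<close> on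
  \<open>[\<lambda>, 1 - \<lambda>]\<close>. On the coarse part of the mesh the step is \<open>h \<in> [1/N, 2/N]\<close>, and the scheme
  is \<open>\<gamma>/4 \<cdot> w\<close> times the second difference of \<open>y\<close> minus the average of \<open>f\<close> at the two
  midpoints, with \<open>w = (cosh \<beta>h + 1)/(cosh \<beta>h - 1)\<close> bounded because \<open>\<beta>h \<ge> \<surd>\<gamma>/C\<^sub>0\<close>.
  Replacing \<open>y\<close> by \<open>y\<^sub>0\<close> costs \<open>O(1/N\<^sup>2)\<close> in both terms, and for \<open>y\<^sub>0\<close> both terms are
  \<open>O(h\<^sup>2)\<close>: its second difference by Taylor, and \<open>f\<close> at the midpoints because \<open>f\<close> vanishes
  on the graph of \<open>y\<^sub>0\<close>.\<close>

lemma nonneg_by_minimum_principle: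
  fixes z z' z'' :: "real \<Rightarrow> real"
  assumes cont: "continuous_on {0..1} z" and z0: "z 0 \<ge> 0" and z1: "z 1 \<ge> 0"
    and d1: "\<And>x. x \<in> {0<..<1} \<Longrightarrow> (z has_real_derivative z' x) (at x)"
    and d2: "\<And>x. x \<in> {0<..<1} \<Longrightarrow> (z' has_real_derivative z'' x) (at x)"
    and concave: "\<And>x. x \<in> {0<..<1} \<Longrightarrow> z x < 0 \<Longrightarrow> z'' x < 0"
    and x: "x \<in> {0..1}"
  shows "z x \<ge> 0"
proof (rule ccontr)
  assume "\<not> z x \<ge> 0"
  obtain xs where xs: "xs \<in> {0..1}" "\<forall>y\<in>{0..1}. z xs \<le> z y"
    using continuous_attains_inf[OF compact_Icc _ cont] by auto
  have "z xs \<le> z x" using xs x by blast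
  then have zn: "z xs < 0" using \<open>\<not> z x \<ge> 0\<close> by linarith
  then have xi: "xs \<in> {0<..<1}" using xs z0 z1 by (cases "xs = 0 \<or> xs = 1") auto
  have "z' xs = 0"
  proof (rule DERIV_local_min[OF d1[OF xi]])
    show "min xs (1 - xs) > 0" using xi by auto
    show "\<forall>y. \<bar>xs - y\<bar> < min xs (1 - xs) \<longrightarrow> z xs \<le> z y" using xs by (auto simp: abs_less_iff)
  qed
  moreover obtain d where d: "d > 0" "\<And>h. h > 0 \<Longrightarrow> h < d \<Longrightarrow> z' xs > z' (xs + h)"
    using DERIV_neg_dec_right[OF d2[OF xi] concave[OF xi zn]] by blast
  define h where "h = min d (1 - xs) / 2"
  have "min d (1 - xs) \<le> 1 - xs" "min d (1 - xs) \<le> d" "min d (1 - xs) > 0" using d xi by auto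
  then have h: "h > 0" "h < d" "xs + h < 1" unfolding h_def using xi by (auto simp: min_def)
  obtain \<xi> where \<xi>: "xs < \<xi>" "\<xi> < xs + h" "z (xs + h) - z xs = h * z' \<xi>"
    using MVT2[of xs "xs + h" z z'] d1 h xi by (smt (verit) greaterThanLessThan_iff)
  have "z' \<xi> < z' xs" using d(2)[of "\<xi> - xs"] \<xi> h by simp
  ultimately have "h * z' \<xi> < 0" using h(1) by (simp add: mult_pos_neg)
  then have "z (xs + h) < z xs" using \<xi>(3) by simp
  moreover have "xs + h \<in> {0..1}" using h xi by auto
  ultimately show False using xs by force
qed

lemma second_difference_bound:
  fixes u u' u'' :: "real \<Rightarrow> real"
  assumes t: "t > 0"
    and d: "\<And>x. x \<in> {c - t..c + t} \<Longrightarrow> (u has_real_derivative u' x) (at x) \<and>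
              (u' has_real_derivative u'' x) (at x) \<and> \<bar>u'' x\<bar> \<le> K"
  shows "\<bar>u (c + t) - 2 * u c + u (c - t)\<bar> \<le> 2 * K * t\<^sup>2"
proof -
  obtain x1 where x1: "c < x1" "x1 < c + t" "u (c + t) - u c = t * u' x1"
    using MVT2[of c "c + t" u u'] d t by force
  obtain x2 where x2: "c - t < x2" "x2 < c" "u c - u (c - t) = t * u' x2"
    using MVT2[of "c - t" c u u'] d t by force
  obtain x3 where x3: "x2 < x3" "x3 < x1" "u' x1 - u' x2 = (x1 - x2) * u'' x3"
    using MVT2[of x2 x1 u' u''] d x1 x2 by force
  have "u (c + t) - 2 * u c + u (c - t) = t * (u' x1 - u' x2)"
    using x1(3) x2(3) by (simp add: algebra_simps)
  then have "\<bar>u (c + t) - 2 * u c + u (c - t)\<bar> = t * ((x1 - x2) * \<bar>u'' x3\<bar>)"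
    using x3(3) t x1 x2 by (simp add: abs_mult)
  also have "\<dots> \<le> t * ((2 * t) * K)"
    using d[of x3] t x1 x2 x3 by (intro mult_left_mono mult_mono) auto
  finally show ?thesis by (simp add: power2_eq_square algebra_simps)
qed

lemma cosh_ratio_antimono:
  fixes s t :: real
  assumes "0 < s" "s \<le> t"
  shows "(cosh t + 1) / (cosh t - 1) \<le> (cosh s + 1) / (cosh s - 1)"
proof -
  have ratio: "(c + 1) / (c - 1) = 1 + 2 / (c - 1)" if "c > 1" for c :: real
    using that by (simp add: field_simps)
  have cs: "1 < cosh s" "cosh s \<le> cosh t"
    using assms cosh_real_nonneg_less_iff[of 0 s] cosh_real_nonneg_le_iff[of s t] by auto
  then have "2 / (cosh t - 1) \<le> 2 / (cosh s - 1)"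
    by (intro divide_left_mono) auto
  then show ?thesis using cs by (simp add: ratio)
qed

lemma disc_F_uniform_stencil:
  fixes x v :: "nat \<Rightarrow> real"
  assumes gam: "gam > 0" and eps: "eps > 0" and h: "h > 0" and i: "0 < i" "i < N"
    and step: "x i - x (i - 1) = h" "x (i + 1) - x i = h"
  shows "disc_F f gam eps x N v i =
      gam / 4 * ((cosh (sqrt gam / eps * h) + 1) / (cosh (sqrt gam / eps * h) - 1))
        * (v (i - 1) - 2 * v i + v (i + 1))
      - (f ((x (i - 1) + x i) / 2) ((v (i - 1) + v i) / 2)
         + f ((x i + x (i + 1)) / 2) ((v i + v (i + 1)) / 2)) / 2"
proof -
  define \<beta> where "\<beta> = sqrt gam / eps"
  define t where "t = \<beta> * h"
  have "\<beta> > 0" "t > 0" using gam eps h by (simp_all add: \<beta>_def t_def)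
  then have sh: "sinh t > 0" and ch: "cosh t > 1"
    using cosh_real_nonneg_less_iff[of 0 t] by auto
  have len: "x i - x (i - 1) = h" "x (i + 1) - x (i + 1 - 1) = h"
    using step by simp_all
  have a: "sch_a gam eps x i = \<beta> / sinh t" "sch_a gam eps x (i + 1) = \<beta> / sinh t"
    unfolding sch_a_def sch_beta_def len by (simp_all add: \<beta>_def t_def)
  have d: "sch_d gam eps x i = \<beta> * cosh t / sinh t" "sch_d gam eps x (i + 1) = \<beta> * cosh t / sinh t"
    unfolding sch_d_def sch_beta_def len by (simp_all add: \<beta>_def t_def tanh_def)
  define E where "E = \<beta> * (cosh t - 1) / sinh t"
  have Dd: "sch_Dd gam eps x i = E" "sch_Dd gam eps x (i + 1) = E"
    unfolding sch_Dd_def a d E_def by (simp_all add: right_diff_distrib diff_divide_distrib)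
  define P where "P = \<beta> / sinh t + \<beta> * cosh t / sinh t"
  have "P / E = (cosh t + 1) / (cosh t - 1)"
    using sh ch \<open>\<beta> > 0\<close> by (simp add: P_def E_def field_simps)
  moreover have "E \<noteq> 0" using sh ch \<open>\<beta> > 0\<close> by (simp add: E_def)
  moreover have "gam / (E + E) * (P / 2 * a - (P / 2 + P / 2) * b + P / 2 * c - E / gam * F1 - E / gam * F2)
      = gam / 4 * (P / E) * (a - 2 * b + c) - (F1 + F2) / 2" if "E \<noteq> 0" for a b c F1 F2
    using gam that by (simp add: field_simps)
  ultimately show ?thesis
    using i unfolding disc_F_def Let_def a d Dd P_def[symmetric]
    by (simp add: \<beta>_def t_def)
qed

lemma shishkin_mesh_fine_left:
  assumes "N = 4 * k" "j \<le> k"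
  shows "shishkin_mesh eps m N j = real j * (4 * shishkin_lambda eps m N / real N)"
  using assms by (simp add: shishkin_mesh_def Let_def)

lemma shishkin_mesh_coarse:
  assumes N: "N = 4 * k" "k > 0" and j: "k \<le> j" "j \<le> 3 * k"
  shows "shishkin_mesh eps m N j =
    shishkin_lambda eps m N + real (j - k) * (2 * (1 - 2 * shishkin_lambda eps m N) / real N)"
proof (cases "j = k")
  case True
  then show ?thesis using N by (simp add: shishkin_mesh_def Let_def)
next
  case False
  then have "\<not> j \<le> N div 4" "j \<le> 3 * N div 4" using N j by auto
  then show ?thesis by (simp add: shishkin_mesh_def Let_def N(1))
qed

lemma shishkin_coarse_stencil:
  fixes eps m :: real and N :: nat
  defines "x \<equiv> shishkin_mesh eps m N" and "lam \<equiv> shishkin_lambda eps m N"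
  assumes N: "N = 4 * k" "k > 0" and lam: "lam > 0"
    and i: "k \<le> i" "i + 1 \<le> 2 * k" and left: "lam \<le> x (i - 1)"
  shows "k < i" and "x i - x (i - 1) = 2 * (1 - 2 * lam) / real N"
    and "x (i + 1) - x i = 2 * (1 - 2 * lam) / real N"
proof -
  show "k < i"
  proof (rule ccontr)
    assume "\<not> k < i"
    then have "i = k" using i by simp
    have "x (k - 1) = (real k - 1) * lam / real k"
      using shishkin_mesh_fine_left[OF N(1), of "k - 1"] N by (simp add: x_def lam_def of_nat_diff)
    also have "\<dots> < lam" using lam N by (simp add: field_simps)
    finally show False using left \<open>i = k\<close> by simp
  qed
  define h where "h = 2 * (1 - 2 * lam) / real N"
  have x: "x j = lam + real (j - k) * h" if "j \<in> {i - 1, i, i + 1}" for j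
    using shishkin_mesh_coarse[OF N, of j] that i \<open>k < i\<close> by (auto simp: x_def lam_def h_def)
  have "real (i - k) - real (i - 1 - k) = 1" "real (i + 1 - k) - real (i - k) = 1"
    using \<open>k < i\<close> by (simp_all add: of_nat_diff)
  then have "x i - x (i - 1) = h" and "x (i + 1) - x i = h"
    using x[of "i - 1"] x[of i] x[of "i + 1"] by (simp_all flip: left_diff_distrib)
  then show "x i - x (i - 1) = 2 * (1 - 2 * lam) / real N" and "x (i + 1) - x i = 2 * (1 - 2 * lam) / real N"
    by (simp_all add: h_def)
qed

lemma shishkin_interior_stencil:
  fixes eps m :: real and N :: nat
  defines "x \<equiv> shishkin_mesh eps m N" and "lam \<equiv> shishkin_lambda eps m N"
    and "h \<equiv> 2 * (1 - 2 * shishkin_lambda eps m N) / real N"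
  assumes eps: "eps > 0" and m: "m > 0" and N: "N > 0" "4 dvd N"
    and lam: "lam = 2 * eps * ln (real N) / sqrt m"
    and i: "N div 4 \<le> i" "i \<le> N div 2 - 1"
    and mesh: "\<forall>j\<in>{i - 1, i, i + 1}. x j \<in> {x (N div 4) .. 1/2}"
  shows "0 < i" "i < N" "0 < lam" "lam \<le> 1/4" "lam \<le> x (i - 1)" "x (i + 1) \<le> 1/2"
    and "x i - x (i - 1) = h" "x (i + 1) - x i = h" "1 / real N \<le> h" "h \<le> 2 / real N"
proof -
  obtain k where N4: "N = 4 * k" and k: "k > 0" using N by (auto elim!: dvdE)
  have "ln (real N) > 0" using N4 k by simp
  then show lam_pos: "0 < lam" using eps m by (simp add: lam)
  show lam_le: "lam \<le> 1/4" by (simp add: lam_def shishkin_lambda_def)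
  have "x (N div 4) = lam" using shishkin_mesh_coarse[OF N4 k, of k] N4 by (simp add: x_def lam_def)
  then show pts: "lam \<le> x (i - 1)" "x (i + 1) \<le> 1/2" using mesh by auto
  have "k \<le> i" "i + 1 \<le> 2 * k" using i N4 k by auto
  note stencil = shishkin_coarse_stencil[OF N4 k, where eps = eps and m = m, folded lam_def x_def,
      OF lam_pos this pts(1)]
  then show "x i - x (i - 1) = h" "x (i + 1) - x i = h" by (simp_all add: h_def lam_def)
  show "0 < i" "i < N" using stencil(1) \<open>i + 1 \<le> 2 * k\<close> N4 by linarith+
  show "1 / real N \<le> h" "h \<le> 2 / real N"
    using lam_pos lam_le N by (auto simp: h_def lam_def[symmetric] divide_right_mono)
qed

locale monotone_reaction =
  fixes f fy :: "real \<Rightarrow> real \<Rightarrow> real" and m gam :: real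
    and D :: "real \<times> real \<Rightarrow> (real \<times> real) \<Rightarrow>\<^sub>L real"
    and D2 :: "real \<times> real \<Rightarrow> (real \<times> real) \<Rightarrow>\<^sub>L (real \<times> real) \<Rightarrow>\<^sub>L real"
  assumes f_deriv: "\<And>p. p \<in> {0..1} \<times> UNIV \<Longrightarrow>
      ((\<lambda>p. f (fst p) (snd p)) has_derivative D p) (at p within {0..1} \<times> UNIV)"
    and D_deriv: "\<And>p. p \<in> {0..1} \<times> UNIV \<Longrightarrow> (D has_derivative D2 p) (at p within {0..1} \<times> UNIV)"
    and D2_cont: "continuous_on ({0..1} \<times> UNIV) D2"
    and fy_deriv: "\<And>x v. x \<in> {0..1} \<Longrightarrow> (f x has_real_derivative fy x v) (at v)"
    and m_pos: "m > 0"
    and fy_bounds: "\<And>x v. x \<in> {0..1} \<Longrightarrow> m \<le> fy x v \<and> fy x v \<le> gam"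
begin

lemma gam_pos: "gam > 0"
  using fy_bounds[of 0 0] m_pos by simp

lemma f_mean_value:
  assumes "x \<in> {0..1}"
  shows "\<exists>\<xi>. \<bar>\<xi> - w\<bar> \<le> \<bar>v - w\<bar> \<and> f x v - f x w = (v - w) * fy x \<xi>"
proof (cases v w rule: linorder_cases)
  case less
  then obtain \<xi> where "v < \<xi>" "\<xi> < w" "f x w - f x v = (w - v) * fy x \<xi>"
    using MVT2[of v w "f x" "fy x"] fy_deriv assms by blast
  then show ?thesis by (intro exI[of _ \<xi>]) (auto simp: algebra_simps)
next
  case greater
  then obtain \<xi> where "w < \<xi>" "\<xi> < v" "f x v - f x w = (v - w) * fy x \<xi>"
    using MVT2[of w v "f x" "fy x"] fy_deriv assms by blast
  then show ?thesis by (intro exI[of _ \<xi>]) auto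
qed simp

lemma f_increment_bounds:
  assumes "x \<in> {0..1}" "v \<le> w"
  shows "m * (w - v) \<le> f x w - f x v" and "f x w - f x v \<le> gam * (w - v)"
proof -
  obtain \<xi> where "f x w - f x v = (w - v) * fy x \<xi>" using f_mean_value assms(1) by blast
  moreover have "(w - v) * m \<le> (w - v) * fy x \<xi>" "(w - v) * fy x \<xi> \<le> (w - v) * gam"
    using fy_bounds[OF assms(1), of \<xi>] assms(2) by (simp_all add: mult_left_mono)
  ultimately show "m * (w - v) \<le> f x w - f x v" and "f x w - f x v \<le> gam * (w - v)"
    by (simp_all add: mult.commute)
qed

lemma f_lipschitz_bounds:
  assumes x: "x \<in> {0..1}"
  shows "m * \<bar>v - w\<bar> \<le> \<bar>f x v - f x w\<bar> \<and> \<bar>f x v - f x w\<bar> \<le> gam * \<bar>v - w\<bar>"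
proof -
  have ordered: "m * \<bar>v - w\<bar> \<le> \<bar>f x v - f x w\<bar> \<and> \<bar>f x v - f x w\<bar> \<le> gam * \<bar>v - w\<bar>"
    if "v \<le> w" for v w
  proof -
    have "0 \<le> m * (w - v)" using that m_pos by simp
    then show ?thesis using f_increment_bounds[OF x that] that by (simp add: abs_if)
  qed
  show ?thesis using ordered[of v w] ordered[of w v] by (cases "v \<le> w") (auto simp: abs_minus_commute)
qed

lemma f_continuous: "continuous_on ({0..1} \<times> UNIV) (\<lambda>p. f (fst p) (snd p))"
  using f_deriv by (rule has_derivative_continuous_on)

lemma f_ex1_root: assumes x: "x \<in> {0..1}" shows "\<exists>!v. f x v = 0"
proof -
  let ?c = "\<bar>f x 0\<bar> / m"
  have c: "?c \<ge> 0" "m * ?c = \<bar>f x 0\<bar>" using m_pos by simp_all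
  have "\<bar>f x 0\<bar> \<le> f x 0 - f x (- ?c)" "\<bar>f x 0\<bar> \<le> f x ?c - f x 0"
    using f_increment_bounds(1)[OF x, of "- ?c" 0] f_increment_bounds(1)[OF x, of 0 ?c] c by simp_all
  then have "f x (- ?c) \<le> 0" "0 \<le> f x ?c" by linarith+
  moreover have "continuous_on {- ?c..?c} (f x)"
    using fy_deriv[OF x] by (meson DERIV_isCont continuous_at_imp_continuous_on)
  ultimately obtain v where "f x v = 0"
    using IVT'[of "f x" "- ?c" 0 ?c] m_pos by auto
  moreover have "w = v" if "f x w = 0" for w
    using f_lipschitz_bounds[OF x, of w v] that \<open>f x v = 0\<close> m_pos by (auto simp: mult_le_0_iff)
  ultimately show ?thesis by blast
qed

text \<open>The reduced solution \<open>y\<^sub>0\<close> of the paper (the problem with \<open>\<epsilon> = 0\<close>).\<close>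

definition reduced :: "real \<Rightarrow> real" where
  "reduced x = (THE v. f x v = 0)"

lemma f_reduced: "x \<in> {0..1} \<Longrightarrow> f x (reduced x) = 0"
  unfolding reduced_def by (rule theI'[OF f_ex1_root])

lemma f_bound_by_reduced: "x \<in> {0..1} \<Longrightarrow> \<bar>f x v\<bar> \<le> gam * \<bar>v - reduced x\<bar>"
  using f_lipschitz_bounds[of x v "reduced x"] f_reduced by simp

lemma reduced_continuous: "continuous_on {0..1} reduced"
  unfolding continuous_on_def
proof
  fix x0 :: real assume x0: "x0 \<in> {0..1}"
  have "continuous_on {0..1} (\<lambda>x. f x (reduced x0))"
    by (rule continuous_on_compose2[OF f_continuous, of _ "\<lambda>x. (x, reduced x0)", simplified])
       (auto intro!: continuous_intros)
  then have "((\<lambda>x. f x (reduced x0)) \<longlongrightarrow> 0) (at x0 within {0..1})"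
    using x0 f_reduced[OF x0] by (metis continuous_on_def)
  then have "((\<lambda>x. \<bar>f x (reduced x0)\<bar> / m) \<longlongrightarrow> 0) (at x0 within {0..1})"
    using m_pos by (auto intro!: tendsto_eq_intros)
  moreover have "norm (reduced x - reduced x0) \<le> \<bar>f x (reduced x0)\<bar> / m" if "x \<in> {0..1}" for x
    using f_lipschitz_bounds[OF that, of "reduced x" "reduced x0"] f_reduced[OF that] m_pos
    by (simp add: field_simps)
  then have "\<forall>\<^sub>F x in at x0 within {0..1}. norm (reduced x - reduced x0) \<le> \<bar>f x (reduced x0)\<bar> / m"
    unfolding eventually_at_filter by (auto intro: always_eventually)
  ultimately have "((\<lambda>x. reduced x - reduced x0) \<longlongrightarrow> 0) (at x0 within {0..1})"
    by (rule Lim_null_comparison[rotated])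
  then show "(reduced \<longlongrightarrow> reduced x0) (at x0 within {0..1})"
    by (rule LIM_zero_cancel)
qed

lemma at_within_strip: "x \<in> {0<..<1} \<Longrightarrow> at (x, v) within {0..1} \<times> UNIV = at (x :: real, v :: real)"
  by (rule at_within_open_subset[of _ "{0<..<1} \<times> UNIV"]) (auto intro!: open_Times open_greaterThanLessThan)

lemma D_continuous: "continuous_on ({0..1} \<times> UNIV) D"
  using D_deriv by (rule has_derivative_continuous_on)

lemma fy_eq_D:
  assumes x: "x \<in> {0<..<1}"
  shows "D (x, v) (0, 1) = fy x v"
proof -
  have "((\<lambda>p. f (fst p) (snd p)) has_derivative D (x, v)) (at ((\<lambda>t. (x, t)) v))"
    using f_deriv[of "(x, v)"] x by (simp add: at_within_strip[OF x])
  then have "((\<lambda>p. f (fst p) (snd p)) \<circ> (\<lambda>t. (x, t)) has_derivative D (x, v) \<circ> (\<lambda>t. (0, t))) (at v)"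
    by (intro diff_chain_at) (auto intro!: derivative_eq_intros)
  then have "(f x has_derivative (\<lambda>t. D (x, v) (0, t))) (at v)"
    by (simp add: comp_def)
  moreover have "(f x has_derivative (\<lambda>t. fy x v * t)) (at v)"
    using fy_deriv[of x v] x by (simp add: has_field_derivative_def)
  ultimately have "(\<lambda>t. D (x, v) (0, t)) = (\<lambda>t. fy x v * t)"
    by (rule has_derivative_unique)
  then show ?thesis by (metis mult.right_neutral)
qed

lemma f_has_partial_x:
  assumes x: "x \<in> {0<..<1}"
  shows "((\<lambda>t. f t v) has_real_derivative D (x, v) (1, 0)) (at x)"
proof -
  have "((\<lambda>p. f (fst p) (snd p)) has_derivative D (x, v)) (at ((\<lambda>t. (t, v)) x))"
    using f_deriv[of "(x, v)"] x by (simp add: at_within_strip[OF x])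
  then have chain: "((\<lambda>p. f (fst p) (snd p)) \<circ> (\<lambda>t. (t, v)) has_derivative D (x, v) \<circ> (\<lambda>t. (t, 0))) (at x)"
    by (intro diff_chain_at) (auto intro!: derivative_eq_intros)
  have "D (x, v) (t, 0) = D (x, v) (1, 0) * t" for t
    using blinfun.scaleR_right[of "D (x, v)" t "(1, 0)"] by (simp add: mult.commute)
  then have "D (x, v) \<circ> (\<lambda>t. (t, 0)) = (\<lambda>t. D (x, v) (1, 0) * t)"
    by (intro ext) (unfold comp_apply)
  with chain show ?thesis
    unfolding has_field_derivative_def by (simp add: comp_def)
qed

definition fx_red :: "real \<Rightarrow> real" where
  "fx_red x = D (x, reduced x) (1, 0)"

definition fy_red :: "real \<Rightarrow> real" where
  "fy_red x = D (x, reduced x) (0, 1)"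

lemma D_graph_continuous: "continuous_on {0..1} (\<lambda>x. D (x, reduced x) u)"
proof -
  have "continuous_on {0..1} (\<lambda>x. D (x, reduced x))"
    by (rule continuous_on_compose2[OF D_continuous continuous_on_Pair[OF continuous_on_id reduced_continuous]])
       auto
  then show ?thesis
    by (rule bounded_bilinear.continuous_on[OF bounded_bilinear_blinfun_apply _ continuous_on_const])
qed

lemma fy_red_ge: assumes "x \<in> {0..1}" shows "m \<le> fy_red x"
proof (rule continuous_ge_on_closure[where S = "{0<..<1}" and f = fy_red])
  show "continuous_on (closure {0<..<1}) fy_red"
    unfolding fy_red_def using D_graph_continuous by simp
  show "x \<in> closure {0<..<1}" using assms by simp
  show "m \<le> fy_red y" if "y \<in> {0<..<1}" for y
    using fy_eq_D[OF that] fy_bounds[of y "reduced y"] that by (simp add: fy_red_def)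
qed

definition reduced' :: "real \<Rightarrow> real" where
  "reduced' x = - (fx_red x / fy_red x)"

lemma fy_tendsto_fy_red:
  assumes x0: "x0 \<in> {0<..<1}" and g: "(g \<longlongrightarrow> reduced x0) (at x0)"
  shows "((\<lambda>x. fy x (g x)) \<longlongrightarrow> fy_red x0) (at x0)"
proof -
  have "((\<lambda>x. (x, g x)) \<longlongrightarrow> (x0, reduced x0)) (at x0)"
    by (rule tendsto_Pair[OF tendsto_ident_at g])
  moreover have "isCont (\<lambda>p. D p (0, 1)) (x0, reduced x0)"
    using continuous_on_interior[OF D_continuous] x0 by (auto simp: interior_Times intro!: continuous_intros)
  ultimately have "((\<lambda>x. D (x, g x) (0, 1)) \<longlongrightarrow> fy_red x0) (at x0)"
    unfolding fy_red_def by (rule isCont_tendsto_compose[rotated])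
  moreover have "\<forall>\<^sub>F x in at x0. x \<in> {0<..<1}"
    using x0 by (intro eventually_at_in_open') auto
  then have "\<forall>\<^sub>F x in at x0. D (x, g x) (0, 1) = fy x (g x)"
    by eventually_elim (simp add: fy_eq_D)
  ultimately show ?thesis by (rule Lim_transform_eventually)
qed

text \<open>The implicit function theorem, done by hand: by the mean value theorem in the second
  argument, the difference quotient of \<open>reduced\<close> is minus a difference quotient of \<open>f\<close> in the first
  argument divided by a value of \<open>fy\<close> near the graph.\<close>

lemma reduced_has_derivative:
  assumes x0: "x0 \<in> {0<..<1}"
  shows "(reduced has_real_derivative reduced' x0) (at x0)"
proof -
  have x0': "x0 \<in> {0..1}" using x0 by auto
  have "\<forall>x\<in>{0..1}. \<exists>\<xi>. \<bar>\<xi> - reduced x0\<bar> \<le> \<bar>reduced x - reduced x0\<bar> \<and>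
      f x (reduced x) - f x (reduced x0) = (reduced x - reduced x0) * fy x \<xi>"
    using f_mean_value by blast
  then obtain \<xi> where \<xi>: "\<And>x. x \<in> {0..1} \<Longrightarrow> \<bar>\<xi> x - reduced x0\<bar> \<le> \<bar>reduced x - reduced x0\<bar> \<and>
      f x (reduced x) - f x (reduced x0) = (reduced x - reduced x0) * fy x (\<xi> x)"
    by metis
  have near: "\<forall>\<^sub>F x in at x0. x \<in> {0<..<1} - {x0}"
    using x0 by (intro eventually_at_in_open) auto
  have "((\<lambda>x. \<xi> x - reduced x0) \<longlongrightarrow> 0) (at x0)"
  proof (rule Lim_null_comparison)
    show "\<forall>\<^sub>F x in at x0. norm (\<xi> x - reduced x0) \<le> \<bar>reduced x - reduced x0\<bar>"
      using near by eventually_elim (use \<xi> in auto)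
    have "isCont reduced x0"
      using continuous_on_interior[OF reduced_continuous] x0 by simp
    then show "((\<lambda>x. \<bar>reduced x - reduced x0\<bar>) \<longlongrightarrow> 0) (at x0)"
      unfolding isCont_def by (rule tendsto_rabs_zero[OF LIM_zero])
  qed
  then have fy_lim: "((\<lambda>x. fy x (\<xi> x)) \<longlongrightarrow> fy_red x0) (at x0)"
    by (rule fy_tendsto_fy_red[OF x0 LIM_zero_cancel])
  have fx_lim: "((\<lambda>x. (f x (reduced x0) - f x0 (reduced x0)) / (x - x0)) \<longlongrightarrow> fx_red x0) (at x0)"
    using f_has_partial_x[OF x0] by (simp add: fx_red_def has_field_derivative_iff)
  have "fy_red x0 \<noteq> 0" using fy_red_ge[OF x0'] m_pos by simp
  then have "((\<lambda>x. - ((f x (reduced x0) - f x0 (reduced x0)) / (x - x0)) / fy x (\<xi> x))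
      \<longlongrightarrow> - fx_red x0 / fy_red x0) (at x0)"
    by (rule tendsto_divide[OF tendsto_minus[OF fx_lim] fy_lim])
  then have "((\<lambda>x. (reduced x - reduced x0) / (x - x0)) \<longlongrightarrow> - fx_red x0 / fy_red x0) (at x0)"
  proof (rule Lim_transform_eventually)
    show "\<forall>\<^sub>F x in at x0. - ((f x (reduced x0) - f x0 (reduced x0)) / (x - x0)) / fy x (\<xi> x)
        = (reduced x - reduced x0) / (x - x0)"
      using near
    proof eventually_elim
      case (elim x)
      then have x: "x \<in> {0..1}" and "x - x0 \<noteq> 0" by auto
      moreover have "fy x (\<xi> x) \<noteq> 0" using fy_bounds[OF x, of "\<xi> x"] m_pos by auto
      ultimately have "reduced x - reduced x0 = - f x (reduced x0) / fy x (\<xi> x)"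
        using \<xi>[OF x, THEN conjunct2] f_reduced[OF x] by (simp add: eq_divide_eq)
      then show ?case using f_reduced[OF x0'] by simp
    qed
  qed
  then show ?thesis by (simp only: has_field_derivative_iff reduced'_def minus_divide_left)
qed

lemma D_graph_has_derivative:
  assumes x: "x \<in> {0<..<1}"
  shows "((\<lambda>t. D (t, reduced t) u) has_real_derivative D2 (x, reduced x) (1, reduced' x) u) (at x)"
proof -
  have graph: "((\<lambda>t. (t, reduced t)) has_derivative (\<lambda>t. (t, reduced' x * t))) (at x)"
    using reduced_has_derivative[OF x] unfolding has_field_derivative_def
    by (rule has_derivative_Pair[OF has_derivative_ident])
  have "(D has_derivative D2 (x, reduced x)) (at ((\<lambda>t. (t, reduced t)) x))"
    using D_deriv[of "(x, reduced x)"] x by (simp add: at_within_strip[OF x])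
  from diff_chain_at[OF graph this]
  have "((\<lambda>t. D (t, reduced t)) has_derivative (\<lambda>t. D2 (x, reduced x) (t, reduced' x * t))) (at x)"
    by (simp add: comp_def)
  from bounded_linear.has_derivative[OF blinfun.bounded_linear_left this, of u]
  have chain: "((\<lambda>t. D (t, reduced t) u) has_derivative (\<lambda>t. D2 (x, reduced x) (t, reduced' x * t) u)) (at x)" .
  have "D2 (x, reduced x) (t, reduced' x * t) u = D2 (x, reduced x) (1, reduced' x) u * t" for t
    using blinfun.scaleR_right[of "D2 (x, reduced x)" t "(1, reduced' x)"]
    by (simp add: blinfun.scaleR_left mult.commute)
  then have "(\<lambda>t. D2 (x, reduced x) (t, reduced' x * t) u) = (\<lambda>t. D2 (x, reduced x) (1, reduced' x) u * t)"
    by (intro ext)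
  with chain show ?thesis
    unfolding has_field_derivative_def by simp
qed

definition reduced'' :: "real \<Rightarrow> real" where
  "reduced'' x = - ((D2 (x, reduced x) (1, reduced' x) (1, 0) * fy_red x
                     - fx_red x * D2 (x, reduced x) (1, reduced' x) (0, 1)) / (fy_red x * fy_red x))"

lemma reduced'_has_derivative:
  assumes x: "x \<in> {0<..<1}"
  shows "(reduced' has_real_derivative reduced'' x) (at x)"
proof -
  have "fy_red x \<noteq> 0" using fy_red_ge[of x] x m_pos by auto
  with D_graph_has_derivative[OF x, of "(1, 0)"] D_graph_has_derivative[OF x, of "(0, 1)"]
  show ?thesis
    unfolding reduced'_def[abs_def] reduced''_def fx_red_def[abs_def] fy_red_def[abs_def]
    by (intro DERIV_minus DERIV_divide)
qed

lemma reduced''_bounded: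
  obtains K where "K > 0" "\<And>x. x \<in> {0<..<1} \<Longrightarrow> \<bar>reduced'' x\<bar> \<le> K"
proof -
  have fy_red_nonzero: "\<forall>x\<in>{0..1}. fy_red x \<noteq> 0" using fy_red_ge m_pos by force
  have fx_cont: "continuous_on {0..1} fx_red" and fy_cont: "continuous_on {0..1} fy_red"
    unfolding fx_red_def[abs_def] fy_red_def[abs_def] by (rule D_graph_continuous)+
  then have "continuous_on {0..1} reduced'"
    unfolding reduced'_def[abs_def] using fy_red_nonzero by (intro continuous_on_minus continuous_on_divide)
  then have "continuous_on {0..1} (\<lambda>x. (1::real, reduced' x))"
    by (intro continuous_on_Pair continuous_on_const)
  moreover have "continuous_on {0..1} (\<lambda>x. D2 (x, reduced x))"
    by (rule continuous_on_compose2[OF D2_cont continuous_on_Pair[OF continuous_on_id reduced_continuous]])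
       auto
  ultimately have "continuous_on {0..1} (\<lambda>x. D2 (x, reduced x) (1, reduced' x))"
    by (rule bounded_bilinear.continuous_on[OF bounded_bilinear_blinfun_apply, rotated])
  then have D2_cont': "continuous_on {0..1} (\<lambda>x. D2 (x, reduced x) (1, reduced' x) u)" for u
    by (rule bounded_bilinear.continuous_on[OF bounded_bilinear_blinfun_apply _ continuous_on_const])
  have "continuous_on {0..1} reduced''"
    unfolding reduced''_def[abs_def] using fy_red_nonzero
    by (intro continuous_on_minus continuous_on_divide continuous_on_diff continuous_on_mult
        D2_cont' fx_cont fy_cont) auto
  then obtain B where B: "B \<ge> 0" "\<And>x. x \<in> {0..1} \<Longrightarrow> norm (reduced'' x) \<le> B"
    using continuous_on_compact_bound[OF compact_Icc] by metis
  show ?thesis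
  proof (rule that)
    show "B + 1 > 0" using B(1) by simp
    show "\<bar>reduced'' x\<bar> \<le> B + 1" if "x \<in> {0<..<1}" for x
      using B(2)[of x] that by simp
  qed
qed

lemma f_sign_bound:
  assumes x: "x \<in> {0..1}" and s: "s = 1 \<or> s = -1" and sign: "s * (v - reduced x) \<le> 0"
  shows "s * f x v \<le> m * (s * (v - reduced x))"
  using s
proof
  assume "s = 1"
  then show ?thesis
    using f_increment_bounds(1)[OF x, of v "reduced x"] f_reduced[OF x] sign by (simp add: algebra_simps)
next
  assume "s = -1"
  then show ?thesis
    using f_increment_bounds(1)[OF x, of "reduced x" v] f_reduced[OF x] sign by (simp add: algebra_simps)
qed

lemma solution_near_reduced:
  assumes eps: "eps > 0" and y: "bvp_solution eps f y"
    and K: "\<And>x. x \<in> {0<..<1} \<Longrightarrow> \<bar>reduced'' x\<bar> \<le> K"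
    and x: "x \<in> {0..1}"
  shows "\<bar>y x - reduced x\<bar> \<le> (\<bar>reduced 0\<bar> + \<bar>reduced 1\<bar>) *
           (exp (- (sqrt m / eps) * x) + exp (- (sqrt m / eps) * (1 - x))) + K * eps\<^sup>2 / m"
proof -
  obtain y' y'' where yd: "\<And>x. x \<in> {0<..<1} \<Longrightarrow> (y has_real_derivative y' x) (at x) \<and>
        (y' has_real_derivative y'' x) (at x) \<and> eps\<^sup>2 * y'' x = f x (y x)"
    and y_cont: "continuous_on {0..1} y" and y0: "y 0 = 0" and y1: "y 1 = 0"
    using y unfolding bvp_solution_def by blast
  define k where "k = sqrt m / eps"
  define M where "M = \<bar>reduced 0\<bar> + \<bar>reduced 1\<bar>"
  define \<phi> where "\<phi> t = M * (exp (- k * t) + exp (- k * (1 - t))) + K * eps\<^sup>2 / m" for t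
  define \<phi>' where "\<phi>' t = M * (- k * exp (- k * t) + k * exp (- k * (1 - t)))" for t
  define \<phi>'' where "\<phi>'' t = M * (k\<^sup>2 * (exp (- k * t) + exp (- k * (1 - t))))" for t
  have K0: "K \<ge> 0" using K[of "1/2"] by simp
  have d\<phi>: "(\<phi> has_real_derivative \<phi>' t) (at t)" for t
    unfolding \<phi>_def[abs_def] \<phi>'_def by (auto intro!: derivative_eq_intros simp: algebra_simps)
  have d\<phi>': "(\<phi>' has_real_derivative \<phi>'' t) (at t)" for t
    unfolding \<phi>'_def[abs_def] \<phi>''_def by (auto intro!: derivative_eq_intros simp: algebra_simps power2_eq_square)
  have \<phi>_nonneg: "\<phi> t \<ge> 0" for t
    using K0 m_pos by (simp add: \<phi>_def M_def)
  have \<phi>_boundary: "\<phi> 0 \<ge> M" "\<phi> 1 \<ge> M"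
  proof -
    have "M * 1 \<le> M * (1 + exp (- k))" by (intro mult_left_mono) (auto simp: M_def)
    moreover have "0 \<le> K * eps\<^sup>2 / m" using K0 m_pos by simp
    ultimately show "\<phi> 0 \<ge> M" "\<phi> 1 \<ge> M" by (simp_all add: \<phi>_def add.commute)
  qed
  have \<phi>_ode: "eps\<^sup>2 * \<phi>'' t = m * \<phi> t - K * eps\<^sup>2" for t
  proof -
    have ek: "eps\<^sup>2 * k\<^sup>2 = m" using eps m_pos by (simp add: k_def power_divide)
    have "eps\<^sup>2 * \<phi>'' t = M * (eps\<^sup>2 * k\<^sup>2) * (exp (- k * t) + exp (- k * (1 - t)))"
      by (simp add: \<phi>''_def algebra_simps)
    also have "\<dots> = m * \<phi> t - K * eps\<^sup>2"
      using m_pos by (simp add: ek \<phi>_def algebra_simps)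
    finally show ?thesis .
  qed
  \<comment> \<open>\<open>s = 1\<close> and \<open>s = -1\<close> give the lower and the upper barrier.\<close>
  have barrier: "0 \<le> \<phi> x + s * (y x - reduced x)" if s: "s = 1 \<or> s = -1" for s
  proof (rule nonneg_by_minimum_principle[where z = "\<lambda>t. \<phi> t + s * (y t - reduced t)" and z' = "\<lambda>t. \<phi>' t + s * (y' t - reduced' t)"
        and z'' = "\<lambda>t. \<phi>'' t + s * (y'' t - reduced'' t)"])
    show "continuous_on {0..1} (\<lambda>t. \<phi> t + s * (y t - reduced t))"
      unfolding \<phi>_def[abs_def] by (intro continuous_intros y_cont reduced_continuous)
    show "0 \<le> \<phi> 0 + s * (y 0 - reduced 0)" "0 \<le> \<phi> 1 + s * (y 1 - reduced 1)"
      using s \<phi>_boundary y0 y1 by (auto simp: M_def)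
    show "((\<lambda>t. \<phi> t + s * (y t - reduced t)) has_real_derivative \<phi>' t + s * (y' t - reduced' t)) (at t)"
      if "t \<in> {0<..<1}" for t
      using d\<phi> yd[OF that] reduced_has_derivative[OF that] by (auto intro!: derivative_eq_intros)
    show "((\<lambda>t. \<phi>' t + s * (y' t - reduced' t)) has_real_derivative \<phi>'' t + s * (y'' t - reduced'' t)) (at t)"
      if "t \<in> {0<..<1}" for t
      using d\<phi>' yd[OF that] reduced'_has_derivative[OF that] by (auto intro!: derivative_eq_intros)
    show "\<phi>'' t + s * (y'' t - reduced'' t) < 0"
      if t: "t \<in> {0<..<1}" and neg: "\<phi> t + s * (y t - reduced t) < 0" for t
    proof -
      have "s * (y t - reduced t) \<le> 0" using neg \<phi>_nonneg[of t] by linarith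
      then have "s * f t (y t) \<le> m * (s * (y t - reduced t))"
        using f_sign_bound[OF _ s] t by simp
      moreover have "eps\<^sup>2 * y'' t = f t (y t)" using yd[OF t] by blast
      moreover have "eps\<^sup>2 * (- (s * reduced'' t)) \<le> eps\<^sup>2 * K"
        using K[OF t] s by (intro mult_left_mono) auto
      ultimately have "eps\<^sup>2 * (\<phi>'' t + s * (y'' t - reduced'' t)) \<le> m * (\<phi> t + s * (y t - reduced t))"
        using \<phi>_ode[of t] by (simp add: algebra_simps)
      also have "\<dots> < 0" using neg m_pos by (simp add: mult_pos_neg)
      finally show ?thesis using eps by (simp add: mult_less_0_iff)
    qed
  qed (rule x)
  show ?thesis
    using barrier[of 1] barrier[of "-1"] by (simp add: \<phi>_def M_def k_def abs_le_iff)
qed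

lemma solution_close_outside_layers:
  assumes eps: "eps > 0" and y: "bvp_solution eps f y"
    and K: "\<And>x. x \<in> {0<..<1} \<Longrightarrow> \<bar>reduced'' x\<bar> \<le> K"
    and N: "N > 0" and eps_N: "eps \<le> C0 / real N"
    and z: "2 * eps * ln (real N) / sqrt m \<le> z" "z \<le> 1 - 2 * eps * ln (real N) / sqrt m"
  shows "\<bar>y z - reduced z\<bar> \<le> (2 * (\<bar>reduced 0\<bar> + \<bar>reduced 1\<bar>) + K * C0\<^sup>2 / m) / (real N)\<^sup>2"
proof -
  define k where "k = sqrt m / eps"
  define lam where "lam = 2 * eps * ln (real N) / sqrt m"
  have k: "k > 0" using eps m_pos by (simp add: k_def)
  have "lam \<ge> 0" using eps m_pos N by (simp add: lam_def)
  then have z01: "z \<in> {0..1}" using z by (simp add: lam_def)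
  have "exp (- k * lam) = exp (- (2 * ln (real N)))"
    using eps m_pos by (simp add: k_def lam_def)
  also have "\<dots> = 1 / exp (ln ((real N)\<^sup>2))"
    using N by (simp add: exp_minus inverse_eq_divide ln_realpow)
  also have "\<dots> = 1 / (real N)\<^sup>2"
    using N by simp
  finally have decay: "exp (- k * lam) = 1 / (real N)\<^sup>2" .
  have "exp (- k * z) \<le> 1 / (real N)\<^sup>2" "exp (- k * (1 - z)) \<le> 1 / (real N)\<^sup>2"
    using z k unfolding decay[symmetric] lam_def[symmetric] by (simp_all add: mult_left_mono)
  then have "(\<bar>reduced 0\<bar> + \<bar>reduced 1\<bar>) * (exp (- k * z) + exp (- k * (1 - z)))
      \<le> (\<bar>reduced 0\<bar> + \<bar>reduced 1\<bar>) * (2 / (real N)\<^sup>2)"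
    by (intro mult_left_mono) auto
  moreover have "K * eps\<^sup>2 / m \<le> K * (C0 / real N)\<^sup>2 / m"
    using K[of "1/2"] eps eps_N m_pos by (intro divide_right_mono mult_left_mono power_mono) auto
  ultimately have "\<bar>y z - reduced z\<bar> \<le> (\<bar>reduced 0\<bar> + \<bar>reduced 1\<bar>) * (2 / (real N)\<^sup>2) + K * (C0 / real N)\<^sup>2 / m"
    using solution_near_reduced[OF eps y K z01] unfolding k_def by linarith
  also have "\<dots> = (2 * (\<bar>reduced 0\<bar> + \<bar>reduced 1\<bar>) + K * C0\<^sup>2 / m) / (real N)\<^sup>2"
    using N m_pos by (simp add: field_simps power_divide)
  finally show ?thesis .
qed

lemma reduced_second_difference:
  assumes K: "\<And>x. x \<in> {0<..<1} \<Longrightarrow> \<bar>reduced'' x\<bar> \<le> K"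
    and t: "t > 0" and c: "0 < c - t" "c + t < 1"
  shows "\<bar>reduced (c + t) - 2 * reduced c + reduced (c - t)\<bar> \<le> 2 * K * t\<^sup>2"
proof (rule second_difference_bound[where u' = reduced' and u'' = reduced'', OF t])
  fix x assume "x \<in> {c - t..c + t}"
  then have "x \<in> {0<..<1}" using c by auto
  then show "(reduced has_real_derivative reduced' x) (at x) \<and>
      (reduced' has_real_derivative reduced'' x) (at x) \<and> \<bar>reduced'' x\<bar> \<le> K"
    using reduced_has_derivative reduced'_has_derivative K by blast
qed

lemma midpoint_f_bound:
  assumes K: "\<And>x. x \<in> {0<..<1} \<Longrightarrow> \<bar>reduced'' x\<bar> \<le> K"
    and ab: "0 < a" "a < b" "b < 1"
    and close: "\<bar>u a - reduced a\<bar> \<le> \<Phi>" "\<bar>u b - reduced b\<bar> \<le> \<Phi>"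
  shows "\<bar>f ((a + b) / 2) ((u a + u b) / 2)\<bar> \<le> gam * (\<Phi> + K * (b - a)\<^sup>2 / 4)"
proof -
  define c where "c = (a + b) / 2"
  define t where "t = (b - a) / 2"
  have ct: "c + t = b" "c - t = a" "t > 0" using ab by (simp_all add: c_def t_def field_simps)
  have sd: "\<bar>reduced (c + t) - 2 * reduced c + reduced (c - t)\<bar> \<le> 2 * K * t\<^sup>2"
    using ab ct by (intro reduced_second_difference[OF K]) auto
  define X where "X = K * (b - a)\<^sup>2"
  have "2 * K * t\<^sup>2 = X / 2" by (simp add: t_def X_def power_divide)
  with sd have sd': "\<bar>reduced b - 2 * reduced c + reduced a\<bar> \<le> X / 2"
    unfolding ct by simp
  have avg: "\<bar>(u a + u b) / 2 - reduced c\<bar> \<le> \<Phi> + X / 4"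
    using close sd' unfolding abs_le_iff by argo
  have "c \<in> {0..1}" using ab by (simp add: c_def)
  then have "\<bar>f c ((u a + u b) / 2)\<bar> \<le> gam * \<bar>(u a + u b) / 2 - reduced c\<bar>"
    by (rule f_bound_by_reduced)
  also have "\<dots> \<le> gam * (\<Phi> + K * (b - a)\<^sup>2 / 4)"
    using avg gam_pos unfolding X_def by (intro mult_left_mono) auto
  finally show ?thesis by (simp add: c_def)
qed

lemma stencil_bound:
  assumes K: "\<And>x. x \<in> {0<..<1} \<Longrightarrow> \<bar>reduced'' x\<bar> \<le> K"
    and h: "h > 0" and pts: "0 < xm" "xc = xm + h" "xp = xc + h" "xp < 1"
    and close: "\<bar>u xm - reduced xm\<bar> \<le> \<Phi>" "\<bar>u xc - reduced xc\<bar> \<le> \<Phi>" "\<bar>u xp - reduced xp\<bar> \<le> \<Phi>"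
    and w: "0 \<le> w" "w \<le> R"
  shows "\<bar>gam / 4 * w * (u xm - 2 * u xc + u xp)
           - (f ((xm + xc) / 2) ((u xm + u xc) / 2) + f ((xc + xp) / 2) ((u xc + u xp) / 2)) / 2\<bar>
         \<le> gam * R / 4 * (4 * \<Phi> + 2 * K * h\<^sup>2) + gam * (\<Phi> + K * h\<^sup>2 / 4)"
proof -
  have "\<bar>reduced xp - 2 * reduced xc + reduced xm\<bar> \<le> 2 * K * h\<^sup>2"
    using reduced_second_difference[OF K h, of xc] pts by simp
  then have "\<bar>u xm - 2 * u xc + u xp\<bar> \<le> 4 * \<Phi> + 2 * K * h\<^sup>2"
    using close unfolding abs_le_iff by argo
  moreover have "0 \<le> gam * w / 4" "gam * w / 4 \<le> gam * R / 4" using w gam_pos by simp_all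
  ultimately have "\<bar>gam / 4 * w * (u xm - 2 * u xc + u xp)\<bar> \<le> gam * R / 4 * (4 * \<Phi> + 2 * K * h\<^sup>2)"
    by (simp add: abs_mult mult_mono)
  moreover have "\<bar>f ((xm + xc) / 2) ((u xm + u xc) / 2)\<bar> \<le> gam * (\<Phi> + K * h\<^sup>2 / 4)"
    using midpoint_f_bound[OF K, of xm xc u \<Phi>] close pts h by simp
  moreover have "\<bar>f ((xc + xp) / 2) ((u xc + u xp) / 2)\<bar> \<le> gam * (\<Phi> + K * h\<^sup>2 / 4)"
    using midpoint_f_bound[OF K, of xc xp u \<Phi>] close pts h by simp
  ultimately show ?thesis unfolding abs_le_iff by argo
qed

lemma truncation_error_at:
  fixes N :: nat and eps C0 K :: real
  defines "x \<equiv> shishkin_mesh eps m N"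
    and "R \<equiv> (cosh (sqrt gam / C0) + 1) / (cosh (sqrt gam / C0) - 1)"
    and "C1 \<equiv> 2 * (\<bar>reduced 0\<bar> + \<bar>reduced 1\<bar>) + K * C0\<^sup>2 / m"
  assumes K: "\<And>x. x \<in> {0<..<1} \<Longrightarrow> \<bar>reduced'' x\<bar> \<le> K" and C0: "C0 > 0"
    and eps: "eps > 0" and N: "N > 0" "4 dvd N"
    and lam: "shishkin_lambda eps m N = 2 * eps * ln (real N) / sqrt m"
    and eps_N: "eps \<le> C0 / real N" and y: "bvp_solution eps f y"
    and i: "N div 4 \<le> i" "i \<le> N div 2 - 1"
    and mesh: "\<forall>j\<in>{i - 1, i, i + 1}. x j \<in> {x (N div 4) .. 1/2}"
  shows "\<bar>disc_F f gam eps x N (\<lambda>j. y (x j)) i\<bar> \<le> (gam * R * (C1 + 2 * K) + gam * (C1 + K)) / (real N)\<^sup>2"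
proof -
  define lam where "lam = shishkin_lambda eps m N"
  define h where "h = 2 * (1 - 2 * lam) / real N"
  note mesh_facts = shishkin_interior_stencil[OF eps m_pos N lam i mesh[unfolded x_def],
      folded x_def lam_def, folded h_def]
  have "0 < 1 / real N" using N by simp
  then have h: "h > 0" "1 / real N \<le> h" "h \<le> 2 / real N" using mesh_facts(9,10) by linarith+
  have steps: "x i = x (i - 1) + h" "x (i + 1) = x i + h" using mesh_facts(7,8) by simp_all
  note pts = mesh_facts(5,6) and lam_pos = mesh_facts(3) and lam_le = mesh_facts(4)
  have close: "\<bar>y z - reduced z\<bar> \<le> C1 / (real N)\<^sup>2" if "lam \<le> z" "z \<le> 1/2" for z
    using solution_close_outside_layers[OF eps y K N(1) eps_N] that lam_le
    by (simp add: lam[folded lam_def] C1_def)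
  define w where "w = (cosh (sqrt gam / eps * h) + 1) / (cosh (sqrt gam / eps * h) - 1)"
  \<comment> \<open>\<open>\<epsilon>N \<le> C\<^sub>0\<close> keeps \<open>\<beta>h \<ge> \<surd>\<gamma>/C\<^sub>0\<close> away from \<open>0\<close>, so the weight \<open>w\<close> stays bounded.\<close>
  have "sqrt gam / C0 \<le> sqrt gam / (eps * real N)"
    using eps_N eps N gam_pos C0 by (intro divide_left_mono) (auto simp: field_simps)
  also have "\<dots> = sqrt gam / eps * (1 / real N)" by simp
  also have "\<dots> \<le> sqrt gam / eps * h"
    using h(2) eps gam_pos by (intro mult_left_mono) auto
  finally have "w \<le> R" unfolding w_def R_def using gam_pos C0 by (intro cosh_ratio_antimono) auto
  moreover have "0 \<le> w"
    using cosh_real_nonneg_less_iff[of 0 "sqrt gam / eps * h"] eps h gam_pos by (simp add: w_def)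
  moreover have "0 < x (i - 1)" "x (i + 1) < 1" using pts lam_pos by simp_all
  moreover have "\<bar>y (x j) - reduced (x j)\<bar> \<le> C1 / (real N)\<^sup>2" if "j \<in> {i - 1, i, i + 1}" for j
    using close pts steps h(1) that by auto
  ultimately have "\<bar>gam / 4 * w * (y (x (i - 1)) - 2 * y (x i) + y (x (i + 1)))
      - (f ((x (i - 1) + x i) / 2) ((y (x (i - 1)) + y (x i)) / 2)
         + f ((x i + x (i + 1)) / 2) ((y (x i) + y (x (i + 1))) / 2)) / 2\<bar>
      \<le> gam * R / 4 * (4 * (C1 / (real N)\<^sup>2) + 2 * K * h\<^sup>2) + gam * (C1 / (real N)\<^sup>2 + K * h\<^sup>2 / 4)"
    by (intro stencil_bound[OF K h(1) _ steps]) auto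
  then have "\<bar>disc_F f gam eps x N (\<lambda>j. y (x j)) i\<bar>
      \<le> gam * R / 4 * (4 * (C1 / (real N)\<^sup>2) + 2 * K * h\<^sup>2) + gam * (C1 / (real N)\<^sup>2 + K * h\<^sup>2 / 4)"
    by (simp add: disc_F_uniform_stencil[OF gam_pos eps h(1) mesh_facts(1,2,7,8)] w_def)
  also have "\<dots> \<le> gam * R / 4 * (4 * (C1 / (real N)\<^sup>2) + 2 * K * (4 / (real N)\<^sup>2))
      + gam * (C1 / (real N)\<^sup>2 + K * (4 / (real N)\<^sup>2) / 4)"
  proof -
    have "h\<^sup>2 \<le> (2 / real N)\<^sup>2" using h by (intro power_mono) auto
    then have "h\<^sup>2 \<le> 4 / (real N)\<^sup>2" by (simp add: power_divide)
    moreover have "0 \<le> K" using K[of "1/2"] by simp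
    moreover have "0 \<le> gam * R / 4"
      using gam_pos C0 cosh_real_nonneg_less_iff[of 0 "sqrt gam / C0"] by (simp add: R_def)
    ultimately show ?thesis using gam_pos
      by (intro add_mono mult_left_mono add_left_mono divide_right_mono) auto
  qed
  also have "\<dots> = (gam * R * (C1 + 2 * K) + gam * (C1 + K)) / (real N)\<^sup>2"
    using N by (simp add: field_simps)
  finally show ?thesis .
qed

lemma truncation_error:
  assumes C0: "C0 > 0"
  shows "\<exists>C>0. \<forall>eps N y.
           eps > 0 \<and> N > 0 \<and> 4 dvd N \<and>
           shishkin_lambda eps m N = 2 * eps * ln (real N) / sqrt m \<and>
           eps \<le> C0 / real N \<and>
           bvp_solution eps f y \<longrightarrow>
           (\<forall>i. N div 4 \<le> i \<and> i \<le> N div 2 - 1 \<and>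
                (\<forall>j\<in>{i - 1, i, i + 1}.
                   shishkin_mesh eps m N j \<in> {shishkin_mesh eps m N (N div 4) .. 1/2}) \<longrightarrow>
                \<bar>disc_F f gam eps (shishkin_mesh eps m N) N
                    (\<lambda>j. y (shishkin_mesh eps m N j)) i\<bar> \<le> C / (real N)^2)"
proof -
  obtain K where K_pos: "K > 0" and K: "\<And>x. x \<in> {0<..<1} \<Longrightarrow> \<bar>reduced'' x\<bar> \<le> K"
    using reduced''_bounded by blast
  define R where "R = (cosh (sqrt gam / C0) + 1) / (cosh (sqrt gam / C0) - 1)"
  define C1 where "C1 = 2 * (\<bar>reduced 0\<bar> + \<bar>reduced 1\<bar>) + K * C0\<^sup>2 / m"
  define C where "C = gam * R * (C1 + 2 * K) + gam * (C1 + K)"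
  have "R > 0"
    using gam_pos C0 cosh_real_nonneg_less_iff[of 0 "sqrt gam / C0"] by (simp add: R_def)
  moreover have "C1 \<ge> 0" using K_pos m_pos by (simp add: C1_def)
  ultimately have "C > 0" using gam_pos K_pos by (simp add: C_def add_nonneg_pos)
  moreover have "\<bar>disc_F f gam eps (shishkin_mesh eps m N) N (\<lambda>j. y (shishkin_mesh eps m N j)) i\<bar>
      \<le> C / (real N)\<^sup>2"
    if "eps > 0 \<and> N > 0 \<and> 4 dvd N \<and> shishkin_lambda eps m N = 2 * eps * ln (real N) / sqrt m \<and>
        eps \<le> C0 / real N \<and> bvp_solution eps f y"
      and "N div 4 \<le> i \<and> i \<le> N div 2 - 1 \<and>
        (\<forall>j\<in>{i - 1, i, i + 1}. shishkin_mesh eps m N j \<in> {shishkin_mesh eps m N (N div 4) .. 1/2})"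
    for eps N y i
    using truncation_error_at[OF K C0, of eps N] that unfolding C_def C1_def R_def by blast
  ultimately show ?thesis by blast
qed

end

theorem lemma1:
  fixes f fy :: "real \<Rightarrow> real \<Rightarrow> real" and m gam C0 :: real
  assumes f_C2: "C2_on ({0..1} \<times> UNIV) (\<lambda>p. f (fst p) (snd p))"
    and fy_deriv: "\<forall>x\<in>{0..1}. \<forall>v. (f x has_real_derivative fy x v) (at v)"
    and m_pos: "m > 0"
    and fy_lower: "\<forall>x\<in>{0..1}. \<forall>v. m \<le> fy x v"
    and fy_upper: "\<forall>x\<in>{0..1}. \<forall>v. fy x v \<le> gam"
    and C0_pos: "C0 > 0"
  shows "\<exists>C>0. \<forall>eps N y.
           eps > 0 \<and> N > 0 \<and> 4 dvd N \<and>
           shishkin_lambda eps m N = 2 * eps * ln (real N) / sqrt m \<and>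
           eps \<le> C0 / real N \<and>
           bvp_solution eps f y \<longrightarrow>
           (\<forall>i. N div 4 \<le> i \<and> i \<le> N div 2 - 1 \<and>
                (\<forall>j\<in>{i - 1, i, i + 1}.
                   shishkin_mesh eps m N j \<in> {shishkin_mesh eps m N (N div 4) .. 1/2}) \<longrightarrow>
                \<bar>disc_F f gam eps (shishkin_mesh eps m N) N
                    (\<lambda>j. y (shishkin_mesh eps m N j)) i\<bar> \<le> C / (real N)^2)"
proof -
  obtain D D2 where
    "\<forall>p\<in>{0..1} \<times> UNIV. ((\<lambda>p. f (fst p) (snd p)) has_derivative blinfun_apply (D p)) (at p within {0..1} \<times> UNIV)"
    "\<forall>p\<in>{0..1} \<times> UNIV. (D has_derivative blinfun_apply (D2 p)) (at p within {0..1} \<times> UNIV)"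
    "continuous_on ({0..1} \<times> UNIV) D2"
    using f_C2 unfolding C2_on_def by blast
  then interpret monotone_reaction f fy m gam D D2
    using fy_deriv m_pos fy_lower fy_upper by unfold_locales auto
  show ?thesis by (rule truncation_error[OF C0_pos])
qed

end
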